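(* For every finite graph $G$, the graph $\mathcal{I}^1_{\mathrm{AR}}(G)$ admits a layering.
   Context: $\mathcal{I}^1_{\mathrm{AR}}(G)$ is the graph whose vertices are the nonempty independent sets of $G$, two being adjacent iff their symmetric difference has exactly one element. A layering of a graph $H$ is a partition of $V(H)$ into an ordered sequence of parts (layers) $V_1,\dots,V_p$ such that: (1) each layer is an independent set of $H$; (2) every edge of $H$ joins vertices in consecutive layers $V_i,V_{i+1}$; (3) for $2\le i\le p$, each vertex of $V_i$ has exactly $i$ neighbours in $V_{i-1}$; (4) for $1\le i\le p$, any two vertices of $V_i$ have at most one common neighbour in $V_{i-1}$ and at most one common neighbour in $V_{i+1}$. *)

theory Defs
  imports Main
begin

definition finite_graph :: "'a set \<Rightarrow> ('a \<Rightarrow> 'a \<Rightarrow> bool) \<Rightarrow> bool" where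
  "finite_graph V E \<longleftrightarrow> finite V \<and> (\<forall>x y. E x y \<longrightarrow> x \<in> V \<and> y \<in> V)
     \<and> (\<forall>x y. E x y \<longrightarrow> E y x) \<and> (\<forall>x. \<not> E x x)"

definition independent_set :: "'a set \<Rightarrow> ('a \<Rightarrow> 'a \<Rightarrow> bool) \<Rightarrow> 'a set \<Rightarrow> bool" where
  "independent_set V E S \<longleftrightarrow> S \<subseteq> V \<and> (\<forall>x\<in>S. \<forall>y\<in>S. \<not> E x y)"

definition IAR1_verts :: "'a set \<Rightarrow> ('a \<Rightarrow> 'a \<Rightarrow> bool) \<Rightarrow> 'a set set" where
  "IAR1_verts V E = {S. S \<noteq> {} \<and> independent_set V E S}"

definition IAR1_adj :: "'a set \<Rightarrow> ('a \<Rightarrow> 'a \<Rightarrow> bool) \<Rightarrow> 'a set \<Rightarrow> 'a set \<Rightarrow> bool" where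
  "IAR1_adj V E S T \<longleftrightarrow> S \<in> IAR1_verts V E \<and> T \<in> IAR1_verts V E
     \<and> card ((S - T) \<union> (T - S)) = 1"

definition layering :: "'b set \<Rightarrow> ('b \<Rightarrow> 'b \<Rightarrow> bool) \<Rightarrow> nat \<Rightarrow> (nat \<Rightarrow> 'b set) \<Rightarrow> bool" where
  "layering VH adj p L \<longleftrightarrow>
     \<comment> \<open>ordered partition of VH into nonempty parts\<close>
     (\<forall>i\<in>{1..p}. L i \<noteq> {}) \<and>
     (\<forall>i\<in>{1..p}. \<forall>j\<in>{1..p}. i \<noteq> j \<longrightarrow> L i \<inter> L j = {}) \<and>
     (\<Union>i\<in>{1..p}. L i) = VH \<and>
     \<comment> \<open>(1) each layer is independent\<close>
     (\<forall>i\<in>{1..p}. \<forall>x\<in>L i. \<forall>y\<in>L i. \<not> adj x y) \<and>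
     \<comment> \<open>(2) edges join consecutive layers\<close>
     (\<forall>x\<in>VH. \<forall>y\<in>VH. adj x y \<longrightarrow>
        (\<exists>i. 1 \<le> i \<and> i < p \<and> ((x \<in> L i \<and> y \<in> L (i+1)) \<or> (y \<in> L i \<and> x \<in> L (i+1))))) \<and>
     \<comment> \<open>(3) vertices of layer i have exactly i neighbours in layer i-1\<close>
     (\<forall>i. 2 \<le> i \<and> i \<le> p \<longrightarrow> (\<forall>v\<in>L i. card {u\<in>L (i-1). adj v u} = i)) \<and>
     \<comment> \<open>(4) at most one common neighbour in the previous / next layer\<close>
     (\<forall>i\<in>{1..p}. \<forall>x\<in>L i. \<forall>y\<in>L i. x \<noteq> y \<longrightarrow>
        (2 \<le> i \<longrightarrow> card {u\<in>L (i-1). adj x u \<and> adj y u} \<le> 1) \<and>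
        (i < p \<longrightarrow> card {u\<in>L (i+1). adj x u \<and> adj y u} \<le> 1))"

end

theory Submission
  imports Defs
begin

text \<open>Two nonempty independent sets are adjacent in I^1_AR(G) exactly when one is obtained from
  the other by adding one vertex, so layering by cardinality works for any finite family of
  nonempty finite sets closed under nonempty subsets. An i-set S has exactly the i subsets of
  size i - 1 below it; two distinct i-sets S, T can only have S \<inter> T as a common neighbour
  below and S \<union> T as a common neighbour above.\<close>

lemma card_sym_diff_eq_1_iff:
  assumes "finite S" "finite T"
  shows "card (sym_diff S T) = 1 \<longleftrightarrow>
    S \<subseteq> T \<and> card T = Suc (card S) \<or> T \<subseteq> S \<and> card S = Suc (card T)"
proof -
  consider "S \<subseteq> T" | "T \<subseteq> S" | x y where "x \<in> S - T" "y \<in> T - S"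
    by blast
  then show ?thesis
  proof cases
    case 1
    then have "card (sym_diff S T) = card T - card S"
      using assms by (simp add: card_Diff_subset Diff_eq_empty_iff[THEN iffD2])
    with 1 show ?thesis
      using assms card_mono[of T S] by (auto simp: subset_antisym)
  next
    case 2
    then have "card (sym_diff S T) = card S - card T"
      using assms by (simp add: card_Diff_subset Diff_eq_empty_iff[THEN iffD2])
    with 2 show ?thesis
      using assms card_mono[of S T] by (auto simp: subset_antisym)
  next
    case 3
    then have "card {x, y} \<le> card (sym_diff S T)"
      using assms by (intro card_mono) auto
    moreover have "x \<noteq> y"
      using 3 by blast
    then have "card {x, y} = 2"
      by simp
    ultimately show ?thesis
      using 3 by auto
  qed
qed

lemma card_le_1_if_subset_singleton: "A \<subseteq> {a} \<Longrightarrow> card A \<le> 1"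
  using card_mono[of "{a}" A] by simp

lemma not_subset_if_card_eq:
  assumes "finite T" "card S = card T" "S \<noteq> T"
  shows "\<not> S \<subseteq> T"
  using assms card_subset_eq by blast

lemma card_Int_less_if_card_eq:
  assumes "finite S" "finite T" "card S = card T" "S \<noteq> T"
  shows "card (S \<inter> T) < card S"
proof (rule psubset_card_mono)
  show "S \<inter> T \<subset> S"
    using not_subset_if_card_eq assms by blast
qed (fact assms)

lemma card_less_Un_if_card_eq:
  assumes "finite S" "finite T" "card S = card T" "S \<noteq> T"
  shows "card S < card (S \<union> T)"
proof (rule psubset_card_mono)
  show "S \<subset> S \<union> T"
    using not_subset_if_card_eq[where S=T and T=S] assms by auto
  show "finite (S \<union> T)"
    using assms by blast
qed

locale finite_simplicial_complex =
  fixes F :: "'a set set"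
  assumes finite_faces: "finite F"
    and finite_face: "S \<in> F \<Longrightarrow> finite S"
    and empty_not_face: "{} \<notin> F"
    and face_subset: "S \<in> F \<Longrightarrow> T \<subseteq> S \<Longrightarrow> T \<noteq> {} \<Longrightarrow> T \<in> F"
begin

definition face_adj :: "'a set \<Rightarrow> 'a set \<Rightarrow> bool" where
  "face_adj S T \<longleftrightarrow> S \<in> F \<and> T \<in> F \<and> card (sym_diff S T) = 1"

definition layer :: "nat \<Rightarrow> 'a set set" where
  "layer i = {S \<in> F. card S = i}"

definition height :: nat where
  "height = Max (insert 0 (card ` F))"

lemma face_adj_iff:
  "face_adj S T \<longleftrightarrow> S \<in> F \<and> T \<in> F \<and>
     (S \<subseteq> T \<and> card T = Suc (card S) \<or> T \<subseteq> S \<and> card S = Suc (card T))"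
proof (cases "S \<in> F \<and> T \<in> F")
  case True
  then show ?thesis
    unfolding face_adj_def using card_sym_diff_eq_1_iff[of S T] finite_face by simp
qed (auto simp: face_adj_def)

lemma card_face_pos: "S \<in> F \<Longrightarrow> 0 < card S"
  using finite_face empty_not_face by (metis card_gt_0_iff)

lemma card_face_le_height: "S \<in> F \<Longrightarrow> card S \<le> height"
  unfolding height_def using finite_faces by simp

lemma layer_nonempty:
  assumes i: "i \<in> {1..height}"
  shows "layer i \<noteq> {}"
proof -
  have "height \<in> insert 0 (card ` F)"
    unfolding height_def using finite_faces by (intro Max_in) auto
  with i obtain S where S: "S \<in> F" "card S = height"
    by auto
  with i obtain T where T: "T \<subseteq> S" "card T = i"
    by (metis atLeastAtMost_iff obtain_subset_with_card_n)
  with i have "T \<noteq> {}"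
    by auto
  with S T have "T \<in> layer i"
    unfolding layer_def by (simp add: face_subset)
  then show ?thesis
    by blast
qed

lemma face_adj_card_SucD: "face_adj S U \<Longrightarrow> card S = Suc (card U) \<Longrightarrow> U \<subseteq> S"
  unfolding face_adj_iff by auto

lemma face_adj_sym: "face_adj S U \<Longrightarrow> face_adj U S"
  unfolding face_adj_iff by blast

lemma layer_card_Suc: "S \<in> layer i \<Longrightarrow> U \<in> layer (i - 1) \<Longrightarrow> card S = Suc (card U)"
  unfolding layer_def using card_face_pos by fastforce

lemma lower_neighbours_eq:
  assumes S: "S \<in> layer i" and "2 \<le> i"
  shows "{U \<in> layer (i - 1). face_adj S U} = {U. U \<subseteq> S \<and> card U = i - 1}"
proof (intro equalityI subsetI)
  fix U assume U: "U \<in> {U \<in> layer (i - 1). face_adj S U}"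
  then have "U \<subseteq> S"
    using face_adj_card_SucD layer_card_Suc[OF S] by blast
  with U show "U \<in> {U. U \<subseteq> S \<and> card U = i - 1}"
    unfolding layer_def by simp
next
  fix U assume U: "U \<in> {U. U \<subseteq> S \<and> card U = i - 1}"
  have "S \<in> F" "card S = i"
    using S unfolding layer_def by auto
  moreover from U \<open>2 \<le> i\<close> have "U \<subseteq> S" "U \<noteq> {}" "card U = i - 1"
    by auto
  moreover have "U \<in> F"
    using face_subset \<open>S \<in> F\<close> \<open>U \<subseteq> S\<close> \<open>U \<noteq> {}\<close> .
  ultimately have "U \<in> layer (i - 1)" "face_adj S U"
    using \<open>2 \<le> i\<close> unfolding layer_def face_adj_iff by auto
  then show "U \<in> {U \<in> layer (i - 1). face_adj S U}"
    by simp
qed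

lemma card_lower_neighbours:
  assumes S: "S \<in> layer i" and "2 \<le> i"
  shows "card {U \<in> layer (i - 1). face_adj S U} = i"
proof -
  have "finite S" "card S = i"
    using S finite_face unfolding layer_def by auto
  then have "card {U. U \<subseteq> S \<and> card U = i - 1} = i choose (i - 1)"
    by (simp add: n_subsets)
  also have "\<dots> = i"
    using \<open>2 \<le> i\<close> by (subst binomial_symmetric) auto
  finally show ?thesis
    using lower_neighbours_eq[OF assms] by simp
qed

lemma common_lower_neighbours_subset:
  assumes S: "S \<in> layer i" and T: "T \<in> layer i" and "S \<noteq> T"
  shows "{U \<in> layer (i - 1). face_adj S U \<and> face_adj T U} \<subseteq> {S \<inter> T}"
proof
  fix U assume U: "U \<in> {U \<in> layer (i - 1). face_adj S U \<and> face_adj T U}"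
  then have "U \<subseteq> S \<inter> T"
    using face_adj_card_SucD layer_card_Suc[OF S] layer_card_Suc[OF T] by blast
  have "finite S" "finite T" "card S = card T"
    using S T finite_face unfolding layer_def by auto
  then have "card (S \<inter> T) < card S"
    using card_Int_less_if_card_eq \<open>S \<noteq> T\<close> by blast
  also have "card S = Suc (card U)"
    using U layer_card_Suc[OF S] by blast
  finally have "card (S \<inter> T) \<le> card U"
    by simp
  with \<open>U \<subseteq> S \<inter> T\<close> \<open>finite S\<close> have "U = S \<inter> T"
    by (intro card_seteq) auto
  then show "U \<in> {S \<inter> T}" by simp
qed

lemma common_upper_neighbours_subset:
  assumes S: "S \<in> layer i" and T: "T \<in> layer i" and "S \<noteq> T"
  shows "{U \<in> layer (i + 1). face_adj S U \<and> face_adj T U} \<subseteq> {S \<union> T}"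
proof
  fix U assume U: "U \<in> {U \<in> layer (i + 1). face_adj S U \<and> face_adj T U}"
  then have "U \<in> layer (Suc i)" "card U = Suc (card S)" "card U = Suc (card T)"
    using S T unfolding layer_def by auto
  then have "S \<union> T \<subseteq> U"
    using U face_adj_sym face_adj_card_SucD by blast
  moreover have "card S < card (S \<union> T)"
    using S T \<open>S \<noteq> T\<close> unfolding layer_def
    by (intro card_less_Un_if_card_eq) (auto intro: finite_face)
  moreover have "finite U"
    using U finite_face unfolding layer_def by blast
  ultimately have "S \<union> T = U"
    using \<open>card U = Suc (card S)\<close> by (intro card_seteq) auto
  then show "U \<in> {S \<union> T}" by simp
qed

lemma layering_by_card: "layering F face_adj height layer"
  unfolding layering_def
proof (intro conjI)
  show "\<forall>i\<in>{1..height}. layer i \<noteq> {}"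
    using layer_nonempty by blast
  show "\<forall>i\<in>{1..height}. \<forall>j\<in>{1..height}. i \<noteq> j \<longrightarrow> layer i \<inter> layer j = {}"
    unfolding layer_def by auto
  show "(\<Union>i\<in>{1..height}. layer i) = F"
    unfolding layer_def using card_face_pos card_face_le_height by fastforce
  show "\<forall>i\<in>{1..height}. \<forall>S\<in>layer i. \<forall>T\<in>layer i. \<not> face_adj S T"
    unfolding layer_def face_adj_iff by auto
  show "\<forall>S\<in>F. \<forall>T\<in>F. face_adj S T \<longrightarrow> (\<exists>i. 1 \<le> i \<and> i < height \<and>
      (S \<in> layer i \<and> T \<in> layer (i + 1) \<or> T \<in> layer i \<and> S \<in> layer (i + 1)))"
  proof (intro ballI impI)
    fix S T assume "S \<in> F" "T \<in> F" "face_adj S T"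
    then consider "S \<in> layer (card S)" "T \<in> layer (card S + 1)"
      | "T \<in> layer (card T)" "S \<in> layer (card T + 1)"
      unfolding face_adj_iff layer_def by auto
    then show "\<exists>i. 1 \<le> i \<and> i < height \<and>
        (S \<in> layer i \<and> T \<in> layer (i + 1) \<or> T \<in> layer i \<and> S \<in> layer (i + 1))"
      using card_face_pos card_face_le_height unfolding layer_def
      by cases (fastforce intro: exI[of _ "card S"] exI[of _ "card T"])+
  qed
  show "\<forall>i. 2 \<le> i \<and> i \<le> height \<longrightarrow>
      (\<forall>S\<in>layer i. card {U \<in> layer (i - 1). face_adj S U} = i)"
    using card_lower_neighbours by blast
  show "\<forall>i\<in>{1..height}. \<forall>S\<in>layer i. \<forall>T\<in>layer i. S \<noteq> T \<longrightarrow>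
      (2 \<le> i \<longrightarrow> card {U \<in> layer (i - 1). face_adj S U \<and> face_adj T U} \<le> 1) \<and>
      (i < height \<longrightarrow> card {U \<in> layer (i + 1). face_adj S U \<and> face_adj T U} \<le> 1)"
    using common_lower_neighbours_subset common_upper_neighbours_subset card_le_1_if_subset_singleton
    by meson
qed

end

lemma finite_simplicial_complex_IAR1_verts:
  assumes "finite_graph V E"
  shows "finite_simplicial_complex (IAR1_verts V E)"
proof
  have "finite V"
    using assms unfolding finite_graph_def by blast
  moreover have faces_Pow: "IAR1_verts V E \<subseteq> Pow V"
    unfolding IAR1_verts_def independent_set_def by blast
  ultimately show "finite (IAR1_verts V E)"
    by (simp add: finite_subset[OF faces_Pow])
  show "finite S" if "S \<in> IAR1_verts V E" for S
    using that faces_Pow \<open>finite V\<close> finite_subset by blast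
  show "{} \<notin> IAR1_verts V E"
    by (simp add: IAR1_verts_def)
  show "T \<in> IAR1_verts V E" if "S \<in> IAR1_verts V E" "T \<subseteq> S" "T \<noteq> {}" for S T
    using that unfolding IAR1_verts_def independent_set_def by blast
qed

theorem lemma4p3:
  fixes V :: "'a set" and E :: "'a \<Rightarrow> 'a \<Rightarrow> bool"
  assumes "finite_graph V E"
  shows "\<exists>p L. layering (IAR1_verts V E) (IAR1_adj V E) p L"
proof -
  interpret finite_simplicial_complex "IAR1_verts V E"
    using assms by (rule finite_simplicial_complex_IAR1_verts)
  have "IAR1_adj V E = face_adj"
    by (simp add: fun_eq_iff IAR1_adj_def face_adj_def)
  then show ?thesis
    using layering_by_card by metis
qed

end
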